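(* Let $n_i,m_i$ be positive integers and let $A_i\in\mathbb{R}^{n_i\times n_i}$, $B_i\in\mathbb{R}^{n_i\times m_i}$, $F_i\in\mathbb{R}^{n_i\times m_i}$, $C_i\in\mathbb{R}^{m_i\times n_i}$. Consider the discrete-time subsystem with state $x_i\in\mathbb{R}^{n_i}$, control input $u_i\in\mathbb{R}^{m_i}$ and exogenous (coupling) input $v_i\in\mathbb{R}^{m_i}$, $$x_i^+=A_ix_i+B_iu_i+F_iv_i,\qquad y_i=C_ix_i,$$ together with the virtual output $z_i=y_i+D_iv_i=C_ix_i+D_iv_i$, where $D_i\in\mathbb{R}^{m_i\times m_i}$. Suppose there exist matrices $S_i\in\mathbb{R}^{m_i\times m_i}$, $G_i\in\mathbb{R}^{m_i\times n_i}$ and symmetric positive definite matrices $E_i\in\mathbb{R}^{n_i\times n_i}$, $H_i\in\mathbb{R}^{n_i\times n_i}$ such that $$\begin{bmatrix} E_i & \tfrac12 E_iC_i^\top & (A_iE_i+B_iG_i)^\top & E_i\\ \tfrac12 C_iE_i & \tfrac12 S_i+\tfrac12 S_i^\top & F_i^\top & 0\\ A_iE_i+B_iG_i & F_i & E_i & 0\\ E_i & 0 & 0 & H_i \end{bmatrix}\succeq 0 .$$ Then, with $K_i=G_iE_i^{-1}$ and $D_i=S_i$, the closed-loop subsystem under the control law $u_i=K_ix_i$, i.e. $x_i^+=(A_i+B_iK_i)x_i+F_iv_i$, $z_i=C_ix_i+D_iv_i$, is strictly passive with respect to the input-output pair $(v_i,z_i)$; specifically, with $P_i=E_i^{-1}$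 and $\Gamma_i=H_i^{-1}$ (both positive definite), for all $x_i\in\mathbb{R}^{n_i}$ and $v_i\in\mathbb{R}^{m_i}$, $$(x_i^+)^\top P_ix_i^+-x_i^\top P_ix_i\le v_i^\top z_i-x_i^\top\Gamma_ix_i .$$
   Context: A discrete-time system $x^+=f(x,v)$ with output $z=h(x,v)$ is called strictly passive with respect to the input-output pair $(v,z)$ if there exist a continuous storage function $V:\mathbb{R}^n\to\mathbb{R}_{\ge0}$ with $V(0)=0$ and a dissipation rate $\gamma:\mathbb{R}^n\to\mathbb{R}_{\ge 0}$ with $\gamma(0)=0$ and $\gamma(x)>0$ for $x\neq0$, such that $V(x^+)-V(x)\le z^\top v-\gamma(x)$ for all $x$ and $v$. The notation $M\succeq0$ means the symmetric matrix $M$ is positive semidefinite. *)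

theory Defs
  imports "HOL-Analysis.Analysis"
begin

definition psd :: "real^'k^'k \<Rightarrow> bool" where
  "psd M \<longleftrightarrow> transpose M = M \<and> (\<forall>w. 0 \<le> w \<bullet> (M *v w))"

definition pd :: "real^'k^'k \<Rightarrow> bool" where
  "pd M \<longleftrightarrow> transpose M = M \<and> (\<forall>w. w \<noteq> 0 \<longrightarrow> 0 < w \<bullet> (M *v w))"

definition lmi_block ::
  "real^'n^'n \<Rightarrow> real^'m^'n \<Rightarrow> real^'m^'n \<Rightarrow> real^'n^'m \<Rightarrow> real^'m^'m \<Rightarrow> real^'n^'m
   \<Rightarrow> real^'n^'n \<Rightarrow> real^'n^'n \<Rightarrow> real^('n + 'm + 'n + 'n)^('n + 'm + 'n + 'n)" where
  "lmi_block A B F C S G E H =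
    (let M = A ** E + B ** G in
     \<chi> i j. (case i of
        Inl a \<Rightarrow> (case j of
            Inl b \<Rightarrow> E $ a $ b
          | Inr (Inl b) \<Rightarrow> ((1/2) *\<^sub>R (E ** transpose C)) $ a $ b
          | Inr (Inr (Inl b)) \<Rightarrow> transpose M $ a $ b
          | Inr (Inr (Inr b)) \<Rightarrow> E $ a $ b)
      | Inr (Inl a) \<Rightarrow> (case j of
            Inl b \<Rightarrow> ((1/2) *\<^sub>R (C ** E)) $ a $ b
          | Inr (Inl b) \<Rightarrow> ((1/2) *\<^sub>R S + (1/2) *\<^sub>R transpose S) $ a $ b
          | Inr (Inr (Inl b)) \<Rightarrow> transpose F $ a $ b
          | Inr (Inr (Inr b)) \<Rightarrow> 0)
      | Inr (Inr (Inl a)) \<Rightarrow> (case j of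
            Inl b \<Rightarrow> M $ a $ b
          | Inr (Inl b) \<Rightarrow> F $ a $ b
          | Inr (Inr (Inl b)) \<Rightarrow> E $ a $ b
          | Inr (Inr (Inr b)) \<Rightarrow> 0)
      | Inr (Inr (Inr a)) \<Rightarrow> (case j of
            Inl b \<Rightarrow> E $ a $ b
          | Inr (Inl b) \<Rightarrow> 0
          | Inr (Inr (Inl b)) \<Rightarrow> 0
          | Inr (Inr (Inr b)) \<Rightarrow> H $ a $ b)))"

end

theory Submission
  imports Defs
begin

text \<open>Evaluate the quadratic form of the LMI matrix at \<open>w = (P x, v, -P x\<^sup>+, -\<Gamma> x)\<close>.
  The last two block rows of the matrix applied to \<open>w\<close> vanish (they read
  \<open>x\<^sup>+ - x\<^sup>+\<close> and \<open>x - x\<close>), and the first two rows contribute exactly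
  \<open>x\<^sup>T P x + v\<^sup>T z - (x\<^sup>+)\<^sup>T P x\<^sup>+ - x\<^sup>T \<Gamma> x\<close>, so positive semidefiniteness is
  the dissipation inequality.\<close>

definition vec_Plus :: "'a^'m \<Rightarrow> 'a^'n \<Rightarrow> 'a^('m + 'n)" where
  "vec_Plus x y = (\<chi> i. case i of Inl a \<Rightarrow> x $ a | Inr b \<Rightarrow> y $ b)"

lemma sum_UNIV_Plus:
  "sum f (UNIV :: ('a::finite + 'b::finite) set) = (\<Sum>a\<in>UNIV. f (Inl a)) + (\<Sum>b\<in>UNIV. f (Inr b))"
  using sum.Plus[of "UNIV :: 'a set" "UNIV :: 'b set" f] by (simp add: o_def)

lemma lmi_block_quadratic_form:
  fixes A :: "real^'n^'n" and B F :: "real^'m^'n" and C :: "real^'n^'m"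
    and S :: "real^'m^'m" and G :: "real^'n^'m" and E H :: "real^'n^'n"
    and u1 u3 u4 :: "real^'n" and u2 :: "real^'m"
  defines "w \<equiv> vec_Plus u1 (vec_Plus u2 (vec_Plus u3 u4))"
  shows "w \<bullet> (lmi_block A B F C S G E H *v w) =
     u1 \<bullet> (E *v u1 + ((1/2) *\<^sub>R (E ** transpose C)) *v u2 + transpose (A ** E + B ** G) *v u3 + E *v u4)
   + u2 \<bullet> (((1/2) *\<^sub>R (C ** E)) *v u1 + ((1/2) *\<^sub>R S + (1/2) *\<^sub>R transpose S) *v u2 + transpose F *v u3)
   + u3 \<bullet> ((A ** E + B ** G) *v u1 + F *v u2 + E *v u3)
   + u4 \<bullet> (E *v u1 + H *v u4)"
  unfolding w_def vec_Plus_def lmi_block_def Let_def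
  by (simp add: inner_vec_def matrix_vector_mult_def sum_UNIV_Plus sum.distrib algebra_simps)

lemma inner_matrix_vector_transpose:
  fixes Y :: "real^'m^'n"
  shows "a \<bullet> (Y *v b) = b \<bullet> (transpose Y *v a)"
  by (metis dot_lmul_matrix inner_commute transpose_matrix_vector)

lemma matrix_add_rdistrib:
  fixes A B :: "'a::semiring_1^'n^'m" and C :: "'a^'p^'n"
  shows "(A + B) ** C = A ** C + B ** C"
  by (vector matrix_matrix_mult_def sum.distrib[symmetric] distrib_right)

lemma pd_invertible:
  assumes "pd X"
  shows "invertible X"
proof -
  have "w = 0" if "X *v w = 0" for w
    using assms that unfolding pd_def by (metis inner_zero_right less_irrefl)
  then obtain Y where "Y ** X = mat 1"
    using matrix_left_invertible_ker by blast
  then show ?thesis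
    using invertible_left_inverse by blast
qed

lemma matrix_inv_right:
  assumes "invertible X"
  shows "X ** matrix_inv X = mat 1"
  using someI_ex[OF assms[unfolded invertible_def]] unfolding matrix_inv_def by auto

lemma transpose_matrix_inv_symmetric:
  fixes X :: "'a::comm_semiring_1^'n^'n"
  assumes "invertible X" and "transpose X = X"
  shows "transpose (matrix_inv X) = matrix_inv X"
proof -
  let ?Y = "matrix_inv X"
  have "transpose ?Y = transpose ?Y ** (X ** ?Y)"
    using matrix_inv_right[OF assms(1)] by simp
  also have "\<dots> = transpose (X ** ?Y) ** ?Y"
    using assms(2) by (simp add: matrix_mul_assoc matrix_transpose_mul)
  also have "\<dots> = ?Y"
    using matrix_inv_right[OF assms(1)] by simp
  finally show ?thesis .
qed

lemma pd_matrix_inv: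
  fixes X :: "real^'n^'n"
  assumes "pd X"
  shows "pd (matrix_inv X)"
  unfolding pd_def
proof (intro conjI allI impI)
  let ?Y = "matrix_inv X"
  have inv: "invertible X" and sym: "transpose X = X"
    using assms pd_invertible unfolding pd_def by auto
  then show "transpose ?Y = ?Y"
    by (rule transpose_matrix_inv_symmetric)
  fix w :: "real^'n"
  assume "w \<noteq> 0"
  have XY: "X *v (?Y *v w) = w"
    using matrix_inv_right[OF inv] by (simp add: matrix_vector_mul_assoc)
  with \<open>w \<noteq> 0\<close> have "?Y *v w \<noteq> 0" by auto
  then have "0 < (?Y *v w) \<bullet> (X *v (?Y *v w))"
    using assms unfolding pd_def by blast
  then show "0 < w \<bullet> (?Y *v w)"
    by (simp add: XY inner_commute)
qed

lemma lmi_block_quadratic_form_witness: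
  fixes A :: "real^'n^'n" and B F :: "real^'m^'n" and C :: "real^'n^'m"
    and S :: "real^'m^'m" and G :: "real^'n^'m" and E H P \<Gamma> :: "real^'n^'n"
  assumes EP: "E ** P = mat 1" and H\<Gamma>: "H ** \<Gamma> = mat 1" and E_sym: "transpose E = E"
    and xp: "xp = (A + B ** (G ** P)) *v x + F *v v"
  defines "w \<equiv> vec_Plus (P *v x) (vec_Plus v (vec_Plus (- (P *v xp)) (- (\<Gamma> *v x))))"
  shows "w \<bullet> (lmi_block A B F C S G E H *v w) =
    x \<bullet> (P *v x) + v \<bullet> (C *v x + S *v v) - xp \<bullet> (P *v xp) - x \<bullet> (\<Gamma> *v x)"
proof -
  define M where "M = A ** E + B ** G"
  have E_P: "E *v (P *v y) = y" for y
    using EP by (simp add: matrix_vector_mul_assoc)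
  have H_\<Gamma>: "H *v (\<Gamma> *v y) = y" for y
    using H\<Gamma> by (simp add: matrix_vector_mul_assoc)
  have "M ** P = A + B ** (G ** P)"
    unfolding M_def using EP by (simp add: matrix_add_rdistrib matrix_mul_assoc[symmetric])
  then have MPx: "M *v (P *v x) = xp - F *v v"
    using xp by (simp add: matrix_vector_mul_assoc)
  have row3: "M *v (P *v x) + F *v v + E *v - (P *v xp) = 0"
    by (simp add: MPx E_P vec.neg)
  have row4: "E *v (P *v x) + H *v - (\<Gamma> *v x) = 0"
    by (simp add: E_P H_\<Gamma> vec.neg)
  have "(P *v x) \<bullet> (E *v (P *v x)) = x \<bullet> (P *v x)"
    by (simp add: E_P inner_commute)
  moreover have "(P *v x) \<bullet> (((1/2) *\<^sub>R (E ** transpose C)) *v v) = (1/2) * (v \<bullet> (C *v x))"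
  proof -
    have "(P *v x) \<bullet> (E *v (transpose C *v v)) = (transpose C *v v) \<bullet> x"
      by (subst inner_matrix_vector_transpose) (simp only: E_sym E_P)
    also have "\<dots> = v \<bullet> (C *v x)"
      by (metis inner_commute inner_matrix_vector_transpose transpose_transpose)
    finally show ?thesis
      by (simp add: scaleR_matrix_vector_assoc[symmetric] matrix_vector_mul_assoc[symmetric])
  qed
  moreover have "(P *v x) \<bullet> (transpose M *v - (P *v xp)) = - ((xp - F *v v) \<bullet> (P *v xp))"
    by (subst inner_matrix_vector_transpose) (simp add: MPx inner_commute)
  moreover have "(P *v x) \<bullet> (E *v - (\<Gamma> *v x)) = - (x \<bullet> (\<Gamma> *v x))"
    by (subst inner_matrix_vector_transpose) (simp add: E_sym E_P vec.neg inner_commute)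
  moreover have "v \<bullet> (((1/2) *\<^sub>R (C ** E)) *v (P *v x)) = (1/2) * (v \<bullet> (C *v x))"
    by (simp add: matrix_vector_mul_assoc[symmetric] scaleR_matrix_vector_assoc[symmetric] E_P)
  moreover have "v \<bullet> (((1/2) *\<^sub>R S + (1/2) *\<^sub>R transpose S) *v v) = v \<bullet> (S *v v)"
    using inner_matrix_vector_transpose[of v S v]
    by (simp add: matrix_vector_mult_add_rdistrib scaleR_matrix_vector_assoc[symmetric] inner_add_right)
  moreover have "v \<bullet> (transpose F *v - (P *v xp)) = - ((F *v v) \<bullet> (P *v xp))"
    by (subst inner_matrix_vector_transpose) (simp add: inner_commute)
  ultimately show ?thesis
    unfolding w_def lmi_block_quadratic_form M_def[symmetric] row3 row4
    by (simp add: inner_add_right inner_add_left inner_diff_left)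
qed

theorem lemma1:
  fixes A :: "real^'n^'n" and B F :: "real^'m^'n" and C :: "real^'n^'m"
    and S :: "real^'m^'m" and G :: "real^'n^'m" and E H :: "real^'n^'n"
  assumes E_pd: "pd E" and H_pd: "pd H"
    and LMI: "psd (lmi_block A B F C S G E H)"
  defines "K \<equiv> G ** matrix_inv E"
    and "D \<equiv> S"
    and "P \<equiv> matrix_inv E"
    and "\<Gamma> \<equiv> matrix_inv H"
  shows "pd P \<and> pd \<Gamma> \<and>
    (\<forall>(x :: real^'n) (v :: real^'m).
       let xp = (A + B ** K) *v x + F *v v;
           z = C *v x + D *v v
       in xp \<bullet> (P *v xp) - x \<bullet> (P *v x) \<le> v \<bullet> z - x \<bullet> (\<Gamma> *v x))"
proof -
  have EP: "E ** P = mat 1" and H\<Gamma>: "H ** \<Gamma> = mat 1"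
    unfolding P_def \<Gamma>_def using matrix_inv_right pd_invertible E_pd H_pd by auto
  have E_sym: "transpose E = E"
    using E_pd by (simp add: pd_def)
  have "xp \<bullet> (P *v xp) - x \<bullet> (P *v x) \<le> v \<bullet> (C *v x + S *v v) - x \<bullet> (\<Gamma> *v x)"
    if "xp = (A + B ** K) *v x + F *v v" for x v xp
  proof -
    have xp: "xp = (A + B ** (G ** P)) *v x + F *v v"
      using that unfolding K_def P_def .
    have "0 \<le> x \<bullet> (P *v x) + v \<bullet> (C *v x + S *v v) - xp \<bullet> (P *v xp) - x \<bullet> (\<Gamma> *v x)"
      using LMI unfolding psd_def lmi_block_quadratic_form_witness[OF EP H\<Gamma> E_sym xp, symmetric]
      by blast
    then show ?thesis by simp
  qed
  then show ?thesis
    using pd_matrix_inv E_pd H_pd unfolding P_def \<Gamma>_def D_def Let_def by auto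
qed

end
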